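(* Suppose $G_1$ and $G_2$ are Polish groups, each of which is isomorphic (as a topological group) to a closed subgroup of the other. If $G_1$ has an $F_\sigma$ subgroup $H_1$ which is universal for $K_\sigma$ subgroups of $G_1$ (i.e., for every $K_\sigma$ subgroup $K\subseteq G_1$ there is a continuous homomorphism $\varphi:G_1\to G_1$ with $\varphi^{-1}(H_1)=K$), then $G_2$ has an $F_\sigma$ subgroup with the analogous property for $K_\sigma$ subgroups of $G_2$.
   Context: A $K_\sigma$ set is a countable union of compact sets; an $F_\sigma$ set is a countable union of closed sets. *)

theory Defs
  imports "HOL-Analysis.Analysis" "HOL-Algebra.Group"
begin

definition topological_group :: "'a monoid \<Rightarrow> 'a topology \<Rightarrow> bool" where
  "topological_group G T \<longleftrightarrow>
     group G \<and> topspace T = carrier G \<and>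
     continuous_map (prod_topology T T) T (\<lambda>(x, y). x \<otimes>\<^bsub>G\<^esub> y) \<and>
     continuous_map T T (\<lambda>x. inv\<^bsub>G\<^esub> x)"

definition Polish_space_top :: "'a topology \<Rightarrow> bool" where
  "Polish_space_top T \<longleftrightarrow> completely_metrizable_space T \<and> separable_space T"

definition Polish_group :: "'a monoid \<Rightarrow> 'a topology \<Rightarrow> bool" where
  "Polish_group G T \<longleftrightarrow> topological_group G T \<and> Polish_space_top T"

definition ksigma_in :: "'a topology \<Rightarrow> 'a set \<Rightarrow> bool" where
  "ksigma_in X \<equiv> countable union_of compactin X"

definition closed_subgroup_embedding ::
  "'a monoid \<Rightarrow> 'a topology \<Rightarrow> 'b monoid \<Rightarrow> 'b topology \<Rightarrow> ('a \<Rightarrow> 'b) \<Rightarrow> bool" where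
  "closed_subgroup_embedding G1 T1 G2 T2 f \<longleftrightarrow>
     f \<in> hom G1 G2 \<and> inj_on f (carrier G1) \<and>
     subgroup (f ` carrier G1) G2 \<and> closedin T2 (f ` carrier G1) \<and>
     homeomorphic_map T1 (subtopology T2 (f ` carrier G1)) f"

definition universal_Ksigma_subgroup :: "'a monoid \<Rightarrow> 'a topology \<Rightarrow> 'a set \<Rightarrow> bool" where
  "universal_Ksigma_subgroup G T H \<longleftrightarrow>
     subgroup H G \<and> fsigma_in T H \<and>
     (\<forall>K. subgroup K G \<and> ksigma_in T K \<longrightarrow>
        (\<exists>\<phi>. \<phi> \<in> hom G G \<and> continuous_map T T \<phi> \<and>
             {x \<in> carrier G. \<phi> x \<in> H} = K))"

end

theory Submission
  imports Defs
begin

text \<open>Let \<open>f: G1 \<rightarrow> G2\<close> be a closed embedding and \<open>g: G2 \<rightarrow> G1\<close> a continuous injective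
  homomorphism. Then \<open>f ` H1\<close> is universal in \<open>G2\<close>: it is \<open>F\<^sub>\<sigma>\<close> because \<open>f\<close> is a closed map,
  and a \<open>K\<^sub>\<sigma>\<close> subgroup \<open>K\<close> of \<open>G2\<close> is carried by \<open>g\<close> to a \<open>K\<^sub>\<sigma>\<close> subgroup of \<open>G1\<close>, so
  \<open>g ` K\<close> is the preimage of \<open>H1\<close> under some continuous endomorphism \<open>\<phi>\<close>.\<close>

lemma closed_subgroup_embedding_continuous_map:
  assumes "closed_subgroup_embedding G1 T1 G2 T2 f"
  shows "continuous_map T1 T2 f"
  using assms homeomorphic_imp_continuous_map continuous_map_in_subtopology
  unfolding closed_subgroup_embedding_def by blast

lemma closed_subgroup_embedding_closed_map:
  assumes "closed_subgroup_embedding G1 T1 G2 T2 f"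
  shows "closed_map T1 T2 f"
  using assms closed_map_from_closed_subtopology homeomorphic_imp_closed_map
  unfolding closed_subgroup_embedding_def by blast

lemma countable_union_of_image:
  assumes "(countable union_of P) S" and "\<And>C. P C \<Longrightarrow> Q (f ` C)"
  shows "(countable union_of Q) (f ` S)"
proof -
  obtain \<U> where "countable \<U>" "\<forall>C\<in>\<U>. P C" "\<Union>\<U> = S"
    using assms(1) unfolding union_of_def by blast
  then show ?thesis
    unfolding union_of_def using assms(2)
    by (intro exI[of _ "(`) f ` \<U>"]) auto
qed

lemma fsigma_in_closed_map_image:
  "closed_map X Y f \<Longrightarrow> fsigma_in X S \<Longrightarrow> fsigma_in Y (f ` S)"
  unfolding fsigma_in_def closed_map_def by (erule countable_union_of_image) blast

lemma ksigma_in_continuous_map_image: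
  "continuous_map X Y f \<Longrightarrow> ksigma_in X S \<Longrightarrow> ksigma_in Y (f ` S)"
  unfolding ksigma_in_def by (erule countable_union_of_image) (rule image_compactin)

lemma Collect_preimage_conjugate_eq:
  assumes "inj_on f A" "inj_on g B" "g ` B \<subseteq> A" "\<phi> ` A \<subseteq> A" "H \<subseteq> A" "K \<subseteq> B"
    and "{y \<in> A. \<phi> y \<in> H} = g ` K"
  shows "{x \<in> B. f (\<phi> (g x)) \<in> f ` H} = K"
proof -
  have "\<phi> (g x) \<in> A" if "x \<in> B" for x
    using that assms(3,4) by blast
  then have "f (\<phi> (g x)) \<in> f ` H \<longleftrightarrow> g x \<in> {y \<in> A. \<phi> y \<in> H}" if "x \<in> B" for x
    using that assms(1,3,5) by (auto simp: inj_on_image_mem_iff)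
  moreover have "g x \<in> g ` K \<longleftrightarrow> x \<in> K" if "x \<in> B" for x
    using that assms(2,6) by (simp add: inj_on_image_mem_iff)
  ultimately show ?thesis using assms(6,7) by auto
qed

lemma universal_Ksigma_subgroup_transfer:
  assumes "group G1" and "group G2"
    and f: "closed_subgroup_embedding G1 T1 G2 T2 f"
    and g: "g \<in> hom G2 G1" "inj_on g (carrier G2)" "continuous_map T2 T1 g"
    and H1: "universal_Ksigma_subgroup G1 T1 H1"
  shows "universal_Ksigma_subgroup G2 T2 (f ` H1)"
  unfolding universal_Ksigma_subgroup_def
proof (intro conjI allI impI; (elim conjE)?)
  have f_inj: "inj_on f (carrier G1)"
    using f by (simp add: closed_subgroup_embedding_def)
  have f_hom: "group_hom G1 G2 f" and g_hom: "group_hom G2 G1 g"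
    using assms f g by (simp_all add: group_hom_def group_hom_axioms_def closed_subgroup_embedding_def)
  have H1_subgroup: "subgroup H1 G1"
    using H1 by (simp add: universal_Ksigma_subgroup_def)
  then show "subgroup (f ` H1) G2"
    by (rule group_hom.subgroup_img_is_subgroup[OF f_hom])
  show "fsigma_in T2 (f ` H1)"
    using H1 closed_subgroup_embedding_closed_map[OF f] fsigma_in_closed_map_image
    by (auto simp: universal_Ksigma_subgroup_def)
  fix K assume K: "subgroup K G2" "ksigma_in T2 K"
  have "subgroup (g ` K) G1"
    using K(1) by (rule group_hom.subgroup_img_is_subgroup[OF g_hom])
  moreover have "ksigma_in T1 (g ` K)"
    using K(2) g(3) ksigma_in_continuous_map_image by blast
  ultimately obtain \<phi> where \<phi>: "\<phi> \<in> hom G1 G1" "continuous_map T1 T1 \<phi>"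
      "{x \<in> carrier G1. \<phi> x \<in> H1} = g ` K"
    using H1 unfolding universal_Ksigma_subgroup_def by blast
  have "f \<circ> \<phi> \<circ> g \<in> hom G2 G2"
    using g(1) \<phi>(1) f by (simp add: hom_compose closed_subgroup_embedding_def)
  moreover have "continuous_map T2 T2 (f \<circ> \<phi> \<circ> g)"
    using g(3) \<phi>(2) closed_subgroup_embedding_continuous_map[OF f]
    by (simp add: continuous_map_compose)
  moreover have "{x \<in> carrier G2. (f \<circ> \<phi> \<circ> g) x \<in> f ` H1} = K"
    using Collect_preimage_conjugate_eq[OF f_inj g(2) hom_carrier[OF g(1)] hom_carrier[OF \<phi>(1)]
        subgroup.subset[OF H1_subgroup] subgroup.subset[OF K(1)] \<phi>(3)]
    by simp
  ultimately show "\<exists>\<psi>. \<psi> \<in> hom G2 G2 \<and> continuous_map T2 T2 \<psi> \<and>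
      {x \<in> carrier G2. \<psi> x \<in> f ` H1} = K"
    by blast
qed

theorem mainTheorem6:
  fixes G1 :: "'a monoid" and T1 :: "'a topology"
    and G2 :: "'b monoid" and T2 :: "'b topology"
  assumes "Polish_group G1 T1" and "Polish_group G2 T2"
    and "\<exists>f. closed_subgroup_embedding G1 T1 G2 T2 f"
    and "\<exists>g. closed_subgroup_embedding G2 T2 G1 T1 g"
    and "\<exists>H1. universal_Ksigma_subgroup G1 T1 H1"
  shows "\<exists>H2. universal_Ksigma_subgroup G2 T2 H2"
proof -
  obtain f where f: "closed_subgroup_embedding G1 T1 G2 T2 f" using assms(3) by blast
  obtain g where g: "closed_subgroup_embedding G2 T2 G1 T1 g" using assms(4) by blast
  obtain H1 where H1: "universal_Ksigma_subgroup G1 T1 H1" using assms(5) by blast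
  have "group G1" "group G2"
    using assms(1,2) by (simp_all add: Polish_group_def topological_group_def)
  moreover have "g \<in> hom G2 G1" "inj_on g (carrier G2)"
    using g by (simp_all add: closed_subgroup_embedding_def)
  ultimately show ?thesis
    using universal_Ksigma_subgroup_transfer[OF _ _ f _ _ closed_subgroup_embedding_continuous_map[OF g] H1]
    by blast
qed

end
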